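(* Let $n\ge1$ and let $X$ be a lazy simple random walk on the cycle $\mathbb{Z}_n=\{0,1,\dots,n-1\}$. Then for every $\alpha\in(0,1)$, \[ t_{\mathrm{H}}(\alpha)=t_{\mathrm{mov}}(\alpha). \]
   Context: The lazy simple random walk on $\mathbb{Z}_n$ stays put with probability $1/2$ and otherwise moves to $x+1$ or $x-1$ (mod $n$) with probability $1/4$ each; $\pi$ denotes its stationary (uniform) distribution. For a set $A$, $\tau_A=\inf\{t\ge0:X_t\in A\}$ and $t_{\mathrm{H}}(\alpha)=\max_{x,\,A:\pi(A)\ge\alpha}\mathbb{E}_x[\tau_A]$. Let $\mathcal{A}(\alpha)$ be the set of sequences $A=(A_t)_{t\ge0}$ of subsets of $\mathbb{Z}_n$ with $\pi(A_t)\ge\alpha$ for all $t$; for such $A$ let $\tau_A=\inf\{t\ge0:X_t\in A_t\}$ and $t_{\mathrm{mov}}(\alpha)=\sup_{x,\,A\in\mathcal{A}(\alpha)}\mathbb{E}_x[\tau_A]$. *)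

theory Defs
  imports "HOL-Analysis.Analysis"
begin

text \<open>The cycle Z_n is represented by the states {0..<n} (naturals), with arithmetic mod n.\<close>

definition lazy_P :: "nat \<Rightarrow> nat \<Rightarrow> nat \<Rightarrow> real" where
  "lazy_P n x y =
     (if y = x then 1/2 else 0)
   + (if y = (x + 1) mod n then 1/4 else 0)
   + (if y = (x + n - 1) mod n then 1/4 else 0)"

definition unif :: "nat \<Rightarrow> nat set \<Rightarrow> real" where
  "unif n A = real (card (A \<inter> {0..<n})) / real n"

text \<open>killed n A x t y = P_x(X_t = y and tau_A > t), where tau_A = inf {t. X_t \<in> A t}.\<close>
fun killed :: "nat \<Rightarrow> (nat \<Rightarrow> nat set) \<Rightarrow> nat \<Rightarrow> nat \<Rightarrow> nat \<Rightarrow> real" where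
  "killed n A x 0 y = (if y = x \<and> y \<notin> A 0 then 1 else 0)"
| "killed n A x (Suc t) y =
     (if y \<in> A (Suc t) then 0 else (\<Sum>z<n. killed n A x t z * lazy_P n z y))"

text \<open>E_x[tau_A] = sum over t of P_x(tau_A > t) (tail-sum formula for N-valued variables),
  valued in [0,\<infinity>].\<close>
definition exp_hit :: "nat \<Rightarrow> (nat \<Rightarrow> nat set) \<Rightarrow> nat \<Rightarrow> ennreal" where
  "exp_hit n A x = (\<Sum>t. ennreal (\<Sum>y<n. killed n A x t y))"

definition t_H :: "nat \<Rightarrow> real \<Rightarrow> ennreal" where
  "t_H n \<alpha> = (SUP (x, B) \<in> {(x, B). x < n \<and> B \<subseteq> {0..<n} \<and> unif n B \<ge> \<alpha>}.
                 exp_hit n (\<lambda>_. B) x)"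

definition t_mov :: "nat \<Rightarrow> real \<Rightarrow> ennreal" where
  "t_mov n \<alpha> = (SUP (x, A) \<in> {(x, A). x < n \<and> (\<forall>t. A t \<subseteq> {0..<n} \<and> unif n (A t) \<ge> \<alpha>)}.
                 exp_hit n A x)"

end

theory Submission
  imports Defs
begin

text \<open>
  Let mu_t(y) = P_x(X_t = y, tau > t) be the mass of the walk killed on the moving target, and say
  that mu is majorized by a profile c if every set of j states carries mu-mass at most c j.
  A lazy step is the composition of two averagings f \<mapsto> (f + f \<circ> sigma) / 2, with sigma the
  predecessor and then the successor rotation. Each averaging turns a concave majorant c into
  (c (j + 1) + c (j - 1)) / 2, because S \<union> sigma S is strictly larger than S unless S is empty or
  everything. Killing by a target with at least n - m states caps the profile at m. For the static
  target whose complement is the arc of length m centred at the starting point, the masses of the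
  centred arcs obey exactly this recursion; so at every time the survival probability for any
  moving target is at most that for this static one, and summing over time compares the expected
  hitting times.
\<close>

section \<open>Concave majorants\<close>

definition concave_upto :: "nat \<Rightarrow> (nat \<Rightarrow> real) \<Rightarrow> bool" where
  "concave_upto n c \<longleftrightarrow> (\<forall>i. 1 \<le> i \<longrightarrow> i < n \<longrightarrow> c (Suc i) - c i \<le> c i - c (i - 1))"

definition mono_upto :: "nat \<Rightarrow> (nat \<Rightarrow> real) \<Rightarrow> bool" where
  "mono_upto n c \<longleftrightarrow> (\<forall>i<n. c i \<le> c (Suc i))"

definition majorized :: "nat \<Rightarrow> (nat \<Rightarrow> real) \<Rightarrow> (nat \<Rightarrow> real) \<Rightarrow> bool" where
  "majorized n f c \<longleftrightarrow> (\<forall>S \<subseteq> {0..<n}. sum f S \<le> c (card S))"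

definition avg_majorant :: "nat \<Rightarrow> (nat \<Rightarrow> real) \<Rightarrow> nat \<Rightarrow> real" where
  "avg_majorant n c j =
     (if j = 0 then 0 else if n \<le> j then c n else (c (Suc j) + c (j - 1)) / 2)"

lemma concave_uptoD:
  "concave_upto n c \<Longrightarrow> 1 \<le> i \<Longrightarrow> i < n \<Longrightarrow> c (Suc i) - c i \<le> c i - c (i - 1)"
  by (simp add: concave_upto_def)

lemma mono_uptoD:
  assumes "mono_upto n c" "i \<le> j" "j \<le> n"
  shows "c i \<le> c j"
  using assms(2)
proof (induction rule: dec_induct)
  case (step k)
  have "c k \<le> c (Suc k)" using assms(1,3) step(2) unfolding mono_upto_def by simp
  then show ?case using step(3) by linarith
qed simp

lemma concave_upto_increments:
  assumes "concave_upto n c" "p \<le> q" "q < n"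
  shows "c (Suc q) - c q \<le> c (Suc p) - c p"
  using assms(2)
proof (induction rule: dec_induct)
  case (step k)
  have "c (Suc (Suc k)) - c (Suc k) \<le> c (Suc k) - c k"
    using concave_uptoD[OF assms(1), of "Suc k"] assms(3) step(2) by simp
  then show ?case using step(3) by linarith
qed simp

lemma concave_upto_pair:
  assumes "concave_upto n c" "Suc j \<le> a" "a \<le> n" "a \<le> 2 * j"
  shows "c a + c (2 * j - a) \<le> c (Suc j) + c (j - 1)"
  using assms(2-4)
proof (induction rule: dec_induct)
  case base
  then show ?case by (simp add: numeral_2_eq_2)
next
  case (step a)
  have "c (Suc a) - c a \<le> c (Suc (2 * j - Suc a)) - c (2 * j - Suc a)"
    by (rule concave_upto_increments[OF assms(1)]) (use step in auto)
  moreover have "Suc (2 * j - Suc a) = 2 * j - a" using step by simp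
  ultimately show ?case using step by simp
qed

lemma mono_upto_avg_majorant:
  assumes "1 \<le> n" "c 0 = 0" "mono_upto n c"
  shows "mono_upto n (avg_majorant n c)"
  unfolding mono_upto_def
proof (intro allI impI)
  fix i assume i: "i < n"
  have c: "c i \<le> c j" if "i \<le> j" "j \<le> n" for i j using mono_uptoD[OF assms(3) that] .
  consider "i = 0" "n = 1" | "i = 0" "n \<ge> 2" | "i \<ge> 1" "Suc i = n" | "i \<ge> 1" "Suc i < n"
    using i assms(1) by linarith
  then show "avg_majorant n c i \<le> avg_majorant n c (Suc i)"
  proof cases
    case 1 then show ?thesis using c[of 0 1] assms(2) by (simp add: avg_majorant_def)
  next
    case 2 then show ?thesis using c[of 0 2] assms(2) by (simp add: avg_majorant_def numeral_2_eq_2)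
  next
    case 3 then show ?thesis using c[of "i - 1" n] by (simp add: avg_majorant_def)
  next
    case 4 then show ?thesis using c[of "i - 1" i] c[of "Suc i" "Suc (Suc i)"] by (simp add: avg_majorant_def)
  qed
qed

lemma concave_upto_avg_majorant:
  assumes "c 0 = 0" "concave_upto n c"
  shows "concave_upto n (avg_majorant n c)"
  unfolding concave_upto_def
proof (intro allI impI)
  fix i assume i: "1 \<le> i" "i < n"
  note cc = concave_uptoD[OF assms(2)]
  consider "i = 1" "n = 2" | "i = 1" "n > 2" | "i > 1" "Suc i = n" | "i > 1" "Suc i < n"
    using i by linarith
  then show "avg_majorant n c (Suc i) - avg_majorant n c i \<le> avg_majorant n c i - avg_majorant n c (i - 1)"
  proof cases
    case 1 then show ?thesis using assms(1) by (simp add: avg_majorant_def numeral_2_eq_2)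
  next
    case 2
    have "c 3 - c 2 \<le> c 2 - c 1" using cc[of 2] 2 by (simp add: numeral_3_eq_3 numeral_2_eq_2)
    then show ?thesis using 2 assms(1) by (simp add: avg_majorant_def numeral_3_eq_3 numeral_2_eq_2)
  next
    case 3
    define q where "q = i - 2"
    have q: "i = Suc (Suc q)" using 3 by (simp add: q_def)
    have "c (Suc (Suc q)) - c (Suc q) \<le> c (Suc q) - c q" using cc[of "Suc q"] 3 q by simp
    then show ?thesis using 3 q unfolding avg_majorant_def by (simp add: field_simps)
  next
    case 4
    define q where "q = i - 1"
    have q: "i = Suc q" using 4 by (simp add: q_def)
    have a: "c (Suc (Suc i)) - c (Suc i) \<le> c (Suc i) - c i" using cc[of "Suc i"] 4 by simp
    have b: "c i - c q \<le> c q - c (q - 1)" if "q \<noteq> 0" using cc[of q] 4 q that by simp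
    show ?thesis
    proof (cases "q = 0")
      case True then show ?thesis using 4 q a assms(1) by (simp add: avg_majorant_def)
    next
      case False then show ?thesis using 4 q a b by (simp add: avg_majorant_def field_simps)
    qed
  qed
qed

lemma avg_majorant_mono:
  assumes "\<And>j. j \<le> n \<Longrightarrow> c j \<le> d j"
  shows "avg_majorant n c j \<le> avg_majorant n d j"
  using assms[of n] assms[of "Suc j"] assms[of "j - 1"] by (auto simp: avg_majorant_def add_mono)

lemma avg_majorant_cong:
  "(\<And>j. j \<le> n \<Longrightarrow> c j = d j) \<Longrightarrow> avg_majorant n c = avg_majorant n d"
  by (rule ext) (simp add: avg_majorant_def)

lemma capped_profile:
  assumes "concave_upto n c" "mono_upto n c" "m \<le> n"
  shows "concave_upto n (\<lambda>j. c (min j m))" "mono_upto n (\<lambda>j. c (min j m))"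
proof -
  have c: "c i \<le> c j" if "i \<le> j" "j \<le> n" for i j using mono_uptoD[OF assms(2) that] .
  show "mono_upto n (\<lambda>j. c (min j m))"
    unfolding mono_upto_def using c assms(3) by simp
  show "concave_upto n (\<lambda>j. c (min j m))"
    unfolding concave_upto_def
  proof (intro allI impI)
    fix i assume i: "1 \<le> i" "i < n"
    show "c (min (Suc i) m) - c (min i m) \<le> c (min i m) - c (min (i - 1) m)"
    proof (cases "Suc i \<le> m")
      case True then show ?thesis using concave_uptoD[OF assms(1) i] by simp
    next
      case False then show ?thesis using c[of "min (i - 1) m" m] assms(3) by simp
    qed
  qed
qed

lemma majorized_avg_shift:
  assumes n: "1 \<le> n" and \<sigma>: "\<And>y. y < n \<Longrightarrow> \<sigma> y < n" "inj_on \<sigma> {0..<n}"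
    and irreducible: "\<And>S. S \<subseteq> {0..<n} \<Longrightarrow> \<sigma> ` S = S \<Longrightarrow> S = {} \<or> S = {0..<n}"
    and f: "majorized n f c" and c: "concave_upto n c"
  shows "majorized n (\<lambda>y. (f y + f (\<sigma> y)) / 2) (avg_majorant n c)"
  unfolding majorized_def
proof (intro allI impI)
  fix S assume S: "S \<subseteq> {0..<n}"
  have fin: "finite S" using S finite_subset by blast
  have \<sigma>S: "\<sigma> ` S \<subseteq> {0..<n}" using S \<sigma>(1) by auto
  have inj: "inj_on \<sigma> S" using \<sigma>(2) S inj_on_subset by blast
  have card_\<sigma>S: "card (\<sigma> ` S) = card S" using inj card_image by blast
  have fS: "\<And>T. T \<subseteq> {0..<n} \<Longrightarrow> sum f T \<le> c (card T)" using f by (simp add: majorized_def)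
  have "sum (\<lambda>y. (f y + f (\<sigma> y)) / 2) S = (sum f S + sum f (\<sigma> ` S)) / 2"
    using sum.reindex[OF inj, of f] by (simp add: sum.distrib flip: sum_divide_distrib)
  also have "\<dots> = (sum f (S \<union> \<sigma> ` S) + sum f (S \<inter> \<sigma> ` S)) / 2"
    using sum.union_inter[of S "\<sigma> ` S" f] fin by simp
  finally have avg: "sum (\<lambda>y. (f y + f (\<sigma> y)) / 2) S
      = (sum f (S \<union> \<sigma> ` S) + sum f (S \<inter> \<sigma> ` S)) / 2" .
  have card_sum: "card (S \<union> \<sigma> ` S) + card (S \<inter> \<sigma> ` S) = 2 * card S"
    using card_Un_Int[of S "\<sigma> ` S"] fin card_\<sigma>S by simp
  show "sum (\<lambda>y. (f y + f (\<sigma> y)) / 2) S \<le> avg_majorant n c (card S)"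
  proof (cases "S = {} \<or> S = {0..<n}")
    case True
    then have "\<sigma> ` S = S" using card_subset_eq[of S "\<sigma> ` S"] \<sigma>S card_\<sigma>S by auto
    then show ?thesis using True avg fS[OF S] n by (auto simp: avg_majorant_def)
  next
    case False
    then have "card S \<ge> 1" "card S < n"
      using fin S psubset_card_mono[of "{0..<n}" S] by (auto simp: Suc_le_eq card_gt_0_iff)
    have "\<not> \<sigma> ` S \<subseteq> S"
      using irreducible[OF S] False card_subset_eq[of S "\<sigma> ` S"] fin card_\<sigma>S by blast
    \<comment> \<open>S grows strictly under sigma, and concavity trades the pair of cardinalities of
      S \<union> sigma S and S \<inter> sigma S for (card S + 1, card S - 1).\<close>
    then have grow: "Suc (card S) \<le> card (S \<union> \<sigma> ` S)"
      using psubset_card_mono[of "S \<union> \<sigma> ` S" S] fin by (auto simp: Suc_le_eq psubset_eq)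
    have "card (S \<union> \<sigma> ` S) \<le> n" using card_mono[of "{0..<n}" "S \<union> \<sigma> ` S"] S \<sigma>S by simp
    then have "c (card (S \<union> \<sigma> ` S)) + c (card (S \<inter> \<sigma> ` S)) \<le> c (Suc (card S)) + c (card S - 1)"
      using concave_upto_pair[OF c grow] card_sum by (metis add_diff_cancel_left' le_add1)
    moreover have "sum f (S \<union> \<sigma> ` S) \<le> c (card (S \<union> \<sigma> ` S))"
      "sum f (S \<inter> \<sigma> ` S) \<le> c (card (S \<inter> \<sigma> ` S))"
      using fS[of "S \<union> \<sigma> ` S"] fS[of "S \<inter> \<sigma> ` S"] S \<sigma>S by auto
    ultimately show ?thesis using avg \<open>card S \<ge> 1\<close> \<open>card S < n\<close> by (simp add: avg_majorant_def)
  qed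
qed

section \<open>The lazy step on the cycle\<close>

definition cyc_succ :: "nat \<Rightarrow> nat \<Rightarrow> nat" where
  "cyc_succ n y = (y + 1) mod n"

definition cyc_pred :: "nat \<Rightarrow> nat \<Rightarrow> nat" where
  "cyc_pred n y = (y + n - 1) mod n"

lemma cyc_succ_less: "1 \<le> n \<Longrightarrow> cyc_succ n y < n"
  by (simp add: cyc_succ_def)

lemma cyc_pred_less: "1 \<le> n \<Longrightarrow> cyc_pred n y < n"
  by (simp add: cyc_pred_def)

lemma cyc_pred_succ: "y < n \<Longrightarrow> cyc_pred n (cyc_succ n y) = y"
  by (cases "Suc y = n") (simp_all add: cyc_pred_def cyc_succ_def)

lemma cyc_succ_pred:
  assumes "y < n"
  shows "cyc_succ n (cyc_pred n y) = y"
proof (cases "y = 0")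
  case False
  then have "(y + n - 1) mod n = ((y - 1) + n) mod n" by (simp add: Suc_leI)
  also have "\<dots> = y - 1" using assms by (simp add: less_imp_diff_less)
  finally have "(y + n - 1) mod n = y - 1" .
  then show ?thesis using assms False by (simp add: cyc_pred_def cyc_succ_def)
qed (use assms in \<open>simp add: cyc_pred_def cyc_succ_def\<close>)

lemma inj_on_cyc_succ: "inj_on (cyc_succ n) {0..<n}"
  by (rule inj_on_inverseI[where g = "cyc_pred n"]) (simp add: cyc_pred_succ)

lemma inj_on_cyc_pred: "inj_on (cyc_pred n) {0..<n}"
  by (rule inj_on_inverseI[where g = "cyc_succ n"]) (simp add: cyc_succ_pred)

lemma cyc_succ_invariant_trivial:
  assumes S: "S \<subseteq> {0..<n}" and inv: "cyc_succ n ` S \<subseteq> S"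
  shows "S = {} \<or> S = {0..<n}"
proof (cases "S = {}")
  case False
  then obtain y where y: "y \<in> S" by blast
  have orbit: "(y + k) mod n \<in> S" for k
  proof (induction k)
    case 0 then show ?case using y S by auto
  next
    case (Suc k)
    then have "cyc_succ n ((y + k) mod n) \<in> S" using inv by blast
    moreover have "cyc_succ n ((y + k) mod n) = (y + Suc k) mod n"
      by (simp add: cyc_succ_def mod_Suc_eq)
    ultimately show ?case by simp
  qed
  have "z \<in> S" if "z < n" for z
  proof -
    have "y < n" using y S by auto
    then have "y + (n - y + z) = z + n" by simp
    then show ?thesis using orbit[of "n - y + z"] that by simp
  qed
  then show ?thesis using S by auto
qed simp

lemma cyc_pred_invariant_trivial:
  assumes S: "S \<subseteq> {0..<n}" and inv: "cyc_pred n ` S = S"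
  shows "S = {} \<or> S = {0..<n}"
proof -
  have "cyc_succ n ` S = cyc_succ n ` cyc_pred n ` S"
    using inv by simp
  also have "\<dots> = (\<lambda>y. cyc_succ n (cyc_pred n y)) ` S"
    by (rule image_image)
  also have "\<dots> = id ` S"
    by (rule image_cong) (use S cyc_succ_pred in auto)
  finally show ?thesis using cyc_succ_invariant_trivial[OF S] by simp
qed

definition lazy_step :: "nat \<Rightarrow> (nat \<Rightarrow> real) \<Rightarrow> nat \<Rightarrow> real" where
  "lazy_step n f y = f y / 2 + f (cyc_pred n y) / 4 + f (cyc_succ n y) / 4"

text \<open>One averaging for each of the two rotations composing the lazy step.\<close>

definition lazy_majorant :: "nat \<Rightarrow> (nat \<Rightarrow> real) \<Rightarrow> nat \<Rightarrow> real" where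
  "lazy_majorant n c = avg_majorant n (avg_majorant n c)"

lemma majorized_lazy_step:
  assumes n: "1 \<le> n" and f: "majorized n f c" and c: "c 0 = 0" "concave_upto n c"
  shows "majorized n (lazy_step n f) (lazy_majorant n c)"
proof -
  let ?g = "\<lambda>y. (f y + f (cyc_pred n y)) / 2"
  have "majorized n ?g (avg_majorant n c)"
    using majorized_avg_shift[OF n cyc_pred_less[OF n] inj_on_cyc_pred cyc_pred_invariant_trivial f c(2)] .
  moreover have "concave_upto n (avg_majorant n c)"
    using concave_upto_avg_majorant[OF c] .
  ultimately have M: "majorized n (\<lambda>y. (?g y + ?g (cyc_succ n y)) / 2) (avg_majorant n (avg_majorant n c))"
    using majorized_avg_shift[OF n cyc_succ_less[OF n] inj_on_cyc_succ] cyc_succ_invariant_trivial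
    by simp
  have eq: "(?g y + ?g (cyc_succ n y)) / 2 = lazy_step n f y" if "y < n" for y
    using cyc_pred_succ[OF that] by (simp add: lazy_step_def field_simps)
  show ?thesis
    unfolding majorized_def
  proof (intro allI impI)
    fix S assume S: "S \<subseteq> {0..<n}"
    have "sum (lazy_step n f) S = sum (\<lambda>y. (?g y + ?g (cyc_succ n y)) / 2) S"
      by (rule sum.cong) (use S eq in auto)
    then show "sum (lazy_step n f) S \<le> lazy_majorant n c (card S)"
      using M S unfolding majorized_def lazy_majorant_def by simp
  qed
qed

lemma lazy_majorant_zero [simp]: "lazy_majorant n c 0 = 0"
  by (simp add: lazy_majorant_def avg_majorant_def)

lemma lazy_majorant_shape:
  assumes "1 \<le> n" "c 0 = 0" "concave_upto n c" "mono_upto n c"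
  shows "concave_upto n (lazy_majorant n c)" "mono_upto n (lazy_majorant n c)"
  unfolding lazy_majorant_def
  using assms concave_upto_avg_majorant mono_upto_avg_majorant
  by (simp_all add: avg_majorant_def)

lemma lazy_majorant_mono:
  "(\<And>j. j \<le> n \<Longrightarrow> c j \<le> d j) \<Longrightarrow> lazy_majorant n c j \<le> lazy_majorant n d j"
  unfolding lazy_majorant_def by (intro avg_majorant_mono)

lemma sum_lazy_P:
  assumes n: "1 \<le> n" and y: "y < n"
  shows "(\<Sum>z<n. f z * lazy_P n z y) = lazy_step n f y"
proof -
  have "f z * lazy_P n z y = (if z = y then f z / 2 else 0) + (if z = cyc_pred n y then f z / 4 else 0)
      + (if z = cyc_succ n y then f z / 4 else 0)" if z: "z < n" for z
  proof -
    have "(y = cyc_succ n z) = (z = cyc_pred n y)"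
      using cyc_pred_succ[OF z] cyc_succ_pred[OF y] by auto
    moreover have "(y = cyc_pred n z) = (z = cyc_succ n y)"
      using cyc_succ_pred[OF z] cyc_pred_succ[OF y] by auto
    ultimately show ?thesis unfolding lazy_P_def cyc_succ_def cyc_pred_def by auto
  qed
  then have "(\<Sum>z<n. f z * lazy_P n z y) = (\<Sum>z<n. (if z = y then f z / 2 else 0))
      + (\<Sum>z<n. (if z = cyc_pred n y then f z / 4 else 0))
      + (\<Sum>z<n. (if z = cyc_succ n y then f z / 4 else 0))"
    by (simp add: sum.distrib)
  then show ?thesis using y cyc_pred_less[OF n] cyc_succ_less[OF n] by (simp add: lazy_step_def)
qed

lemma sum_killed_0:
  assumes "finite S"
  shows "sum (killed n A x 0) S = (if x \<in> S \<and> x \<notin> A 0 then 1 else 0)"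
proof -
  have "sum (killed n A x 0) S = (\<Sum>y\<in>S. if y = x then (if x \<notin> A 0 then 1 else 0) else 0)"
    by (rule sum.cong) auto
  then show ?thesis using assms by simp
qed

lemma sum_killed_Suc:
  assumes "1 \<le> n" "S \<subseteq> {0..<n}"
  shows "sum (killed n A x (Suc t)) S = sum (lazy_step n (killed n A x t)) (S - A (Suc t))"
proof -
  have "sum (killed n A x (Suc t)) S
      = (\<Sum>y\<in>S. if y \<in> - A (Suc t) then lazy_step n (killed n A x t) y else 0)"
    by (rule sum.cong) (use assms sum_lazy_P[OF assms(1)] in auto)
  also have "\<dots> = sum (lazy_step n (killed n A x t)) (S - A (Suc t))"
    unfolding Diff_eq by (rule sum.inter_restrict[symmetric]) (use assms finite_subset in blast)
  finally show ?thesis .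
qed

section \<open>Centred arcs\<close>

definition arc :: "nat \<Rightarrow> int \<Rightarrow> nat \<Rightarrow> nat set" where
  "arc n a j = {y. y < n \<and> (int y - a) mod int n < int j}"

definition periodic_ext :: "nat \<Rightarrow> (nat \<Rightarrow> real) \<Rightarrow> int \<Rightarrow> real" where
  "periodic_ext n f b = f (nat (b mod int n))"

lemma bij_betw_arc:
  assumes n: "1 \<le> n" and j: "j \<le> n"
  shows "bij_betw (\<lambda>i. nat ((a + int i) mod int n)) {..<j} (arc n a j)"
proof (rule bij_betw_byWitness[where f' = "\<lambda>y. nat ((int y - a) mod int n)"])
  have np: "int n > 0" using n by simp
  show "\<forall>i\<in>{..<j}. nat ((int (nat ((a + int i) mod int n)) - a) mod int n) = i"
  proof
    fix i assume "i \<in> {..<j}"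
    then have "int i < int n" using j by simp
    then have "((a + int i) mod int n - a) mod int n = int i"
      by (simp add: mod_diff_left_eq)
    then show "nat ((int (nat ((a + int i) mod int n)) - a) mod int n) = i" using np by simp
  qed
  show "\<forall>y\<in>arc n a j. nat ((a + int (nat ((int y - a) mod int n))) mod int n) = y"
  proof
    fix y assume y: "y \<in> arc n a j"
    have "(a + (int y - a) mod int n) mod int n = int y"
      using y by (simp add: mod_add_right_eq arc_def)
    then show "nat ((a + int (nat ((int y - a) mod int n))) mod int n) = y" using np by simp
  qed
  show "(\<lambda>i. nat ((a + int i) mod int n)) ` {..<j} \<subseteq> arc n a j"
  proof
    fix y assume "y \<in> (\<lambda>i. nat ((a + int i) mod int n)) ` {..<j}"
    then obtain i where i: "i < j" "y = nat ((a + int i) mod int n)" by auto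
    have iy: "int y = (a + int i) mod int n" using np i by simp
    have "(int y - a) mod int n = int i" using iy i j by (simp add: mod_diff_left_eq)
    moreover have "y < n" using iy np by (simp add: nat_less_iff i(2))
    ultimately show "y \<in> arc n a j" using i by (simp add: arc_def)
  qed
  show "(\<lambda>y. nat ((int y - a) mod int n)) ` arc n a j \<subseteq> {..<j}"
    using np by (auto simp: arc_def nat_less_iff)
qed

lemma sum_arc:
  assumes "1 \<le> n" "j \<le> n"
  shows "sum f (arc n a j) = (\<Sum>i<j. periodic_ext n f (a + int i))"
  using sum.reindex_bij_betw[OF bij_betw_arc[OF assms, of a], of f] by (simp add: periodic_ext_def)

lemma card_arc:
  assumes "1 \<le> n" "j \<le> n"
  shows "card (arc n a j) = j"
  using bij_betw_same_card[OF bij_betw_arc[OF assms, of a]] by simp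

lemma arc_full: "1 \<le> n \<Longrightarrow> arc n a n = {0..<n}"
  by (auto simp: arc_def)

lemma periodic_ext_add_period: "periodic_ext n f (b + int n) = periodic_ext n f b"
  by (simp add: periodic_ext_def)

lemma cyc_pred_periodic:
  assumes "1 \<le> n"
  shows "cyc_pred n (nat (b mod int n)) = nat ((b - 1) mod int n)"
proof -
  have ix: "int (nat (b mod int n)) = b mod int n" using assms by simp
  have "int (cyc_pred n (nat (b mod int n))) = (int (nat (b mod int n)) + int n - 1) mod int n"
    using assms by (simp add: cyc_pred_def of_nat_mod of_nat_diff)
  also have "\<dots> = (b - 1) mod int n"
    unfolding ix by (metis add.commute add_diff_eq mod_add_left_eq mod_add_self1)
  finally show ?thesis by (metis nat_int)
qed

lemma cyc_succ_periodic:
  assumes "1 \<le> n"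
  shows "cyc_succ n (nat (b mod int n)) = nat ((b + 1) mod int n)"
proof -
  have ix: "int (nat (b mod int n)) = b mod int n" using assms by simp
  have "int (cyc_succ n (nat (b mod int n))) = (int (nat (b mod int n)) + 1) mod int n"
    by (simp add: cyc_succ_def of_nat_mod ac_simps)
  also have "\<dots> = (b + 1) mod int n"
    unfolding ix by (rule mod_add_left_eq)
  finally show ?thesis by (metis nat_int)
qed

lemma periodic_ext_lazy_step:
  "1 \<le> n \<Longrightarrow> periodic_ext n (lazy_step n f) b
     = periodic_ext n f b / 2 + periodic_ext n f (b - 1) / 4 + periodic_ext n f (b + 1) / 4"
  by (simp add: periodic_ext_def lazy_step_def cyc_pred_periodic cyc_succ_periodic)

text \<open>The arc {-((j - 1) div 2), ..., j div 2} around 0 (mod n); lengthening it alternately adds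
  a state on the right and on the left.\<close>

definition centered_start :: "nat \<Rightarrow> int" where
  "centered_start j = - ((int j - 1) div 2)"

definition centered_arc :: "nat \<Rightarrow> nat \<Rightarrow> nat set" where
  "centered_arc n j = arc n (centered_start j) j"

lemma centered_start_Suc_Suc: "centered_start (Suc (Suc j)) = centered_start j - 1"
  by (simp add: centered_start_def)

lemma centered_start_Suc:
  "centered_start (Suc j) = centered_start j \<or> centered_start (Suc j) = centered_start j - 1"
  by (simp add: centered_start_def) presburger

lemma centered_arc_subset: "centered_arc n j \<subseteq> {0..<n}"
  by (auto simp: centered_arc_def arc_def)

lemma centered_arc_full: "1 \<le> n \<Longrightarrow> centered_arc n n = {0..<n}"
  by (simp add: centered_arc_def arc_full)

lemma zero_in_centered_arc_one: "1 \<le> n \<Longrightarrow> 0 \<in> centered_arc n 1"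
  by (simp add: centered_arc_def arc_def centered_start_def)

lemma centered_arc_Suc: "centered_arc n j \<subseteq> centered_arc n (Suc j)"
proof
  fix y assume "y \<in> centered_arc n j"
  then have y: "y < n" "(int y - centered_start j) mod int n < int j"
    by (auto simp: centered_arc_def arc_def)
  consider "centered_start (Suc j) = centered_start j" | "centered_start (Suc j) = centered_start j - 1"
    using centered_start_Suc by blast
  then show "y \<in> centered_arc n (Suc j)"
  proof cases
    case 1 then show ?thesis using y by (simp add: centered_arc_def arc_def)
  next
    case 2
    have e: "int y - centered_start (Suc j) = (int y - centered_start j) + 1" by (simp add: 2)
    have "(int y - centered_start (Suc j)) mod int n = ((int y - centered_start j) mod int n + 1) mod int n"
      unfolding e by (simp add: mod_add_left_eq)
    also have "\<dots> \<le> (int y - centered_start j) mod int n + 1"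
      by (rule zmod_le_nonneg_dividend) (use y in simp)
    finally show ?thesis using y by (simp add: centered_arc_def arc_def)
  qed
qed

lemma centered_arc_mono: "i \<le> j \<Longrightarrow> centered_arc n i \<subseteq> centered_arc n j"
  using lift_Suc_mono_le[of "centered_arc n", OF centered_arc_Suc] by blast

lemma card_centered_arc: "1 \<le> n \<Longrightarrow> j \<le> n \<Longrightarrow> card (centered_arc n j) = j"
  unfolding centered_arc_def by (rule card_arc)

definition window_sum :: "(int \<Rightarrow> real) \<Rightarrow> int \<Rightarrow> nat \<Rightarrow> real" where
  "window_sum g a j = (\<Sum>i<j. g (a + int i))"

lemma window_sum_0 [simp]: "window_sum g a 0 = 0"
  by (simp add: window_sum_def)

lemma window_sum_Suc: "window_sum g a (Suc j) = window_sum g a j + g (a + int j)"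
  by (simp add: window_sum_def)

lemma sum_centered_arc:
  "1 \<le> n \<Longrightarrow> j \<le> n \<Longrightarrow> sum f (centered_arc n j) = window_sum (periodic_ext n f) (centered_start j) j"
  unfolding centered_arc_def window_sum_def by (rule sum_arc)

lemma lazy_majorant_interior:
  assumes "2 \<le> i" "i + 2 \<le> n"
  shows "lazy_majorant n c i = (c (i + 2) + 2 * c i + c (i - 2)) / 4"
proof -
  obtain p where "i = Suc (Suc p)" using assms(1) by (metis add_2_eq_Suc le_Suc_ex)
  then show ?thesis using assms by (simp add: lazy_majorant_def avg_majorant_def field_simps)
qed

lemma lazy_majorant_one: "3 \<le> n \<Longrightarrow> lazy_majorant n c 1 = (c 3 + c 1) / 4"
  by (simp add: lazy_majorant_def avg_majorant_def eval_nat_numeral field_simps)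

lemma lazy_majorant_last:
  assumes "3 \<le> n"
  shows "lazy_majorant n c (n - 1) = c n / 2 + c (n - 1) / 4 + c (n - 3) / 4"
proof -
  obtain q where "n = q + 3" using assms by (metis add.commute le_Suc_ex)
  then show ?thesis by (simp add: lazy_majorant_def avg_majorant_def eval_nat_numeral field_simps)
qed

lemma lazy_majorant_window_sums_last:
  assumes per: "\<And>b. g (b + int n) = g b" and full: "\<And>b. window_sum g b n = F"
    and i: "2 \<le> i" "n = i + 1"
  shows "lazy_majorant n (\<lambda>j. window_sum g (centered_start j) j) i
    = window_sum g (centered_start i) i / 2 + window_sum g (centered_start i - 1) i / 4
      + window_sum g (centered_start i + 1) i / 4"
proof -
  define q where "q = i - 2"
  have q: "n = q + 3" and iq: "i = q + 2" using i by (simp_all add: q_def)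
  define a where "a = centered_start i"
  have lq: "centered_start q = a + 1" by (simp add: a_def iq centered_start_Suc_Suc)
  have gn: "\<And>b. g (b + int q + 3) = g b" using per unfolding q by (simp add: algebra_simps)
  have f1: "window_sum g (a - 1) (q + 3) = window_sum g (a - 1) (q + 2) + g (a - 2)"
    using gn[of "a - 2"] by (simp add: window_sum_Suc eval_nat_numeral algebra_simps)
  have f2: "window_sum g (a + 1) (q + 3) = window_sum g (a + 1) (q + 2) + g a"
    using gn[of a] by (simp add: window_sum_Suc eval_nat_numeral algebra_simps)
  have f3: "window_sum g (a + 1) (q + 3) = window_sum g (a + 1) q + g (a - 2) + g (a - 1) + g a"
    using gn[of a] gn[of "a - 1"] gn[of "a - 2"] by (simp add: window_sum_Suc eval_nat_numeral algebra_simps)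
  have f4: "window_sum g a (q + 3) = window_sum g a (q + 2) + g (a - 1)"
    using gn[of "a - 1"] by (simp add: window_sum_Suc eval_nat_numeral algebra_simps)
  have F: "window_sum g (a - 1) (q + 3) = F" "window_sum g (a + 1) (q + 3) = F" "window_sum g a (q + 3) = F"
    "window_sum g (centered_start n) n = F" using full q by auto
  have "lazy_majorant n (\<lambda>j. window_sum g (centered_start j) j) i
      = window_sum g (centered_start n) n / 2 + window_sum g (centered_start (n - 1)) (n - 1) / 4
        + window_sum g (centered_start (n - 3)) (n - 3) / 4"
    using lazy_majorant_last[of n] q iq by simp
  also have "\<dots> = F / 2 + window_sum g a (q + 2) / 4 + window_sum g (a + 1) q / 4"
    using F q iq lq by (simp add: a_def)
  finally show ?thesis using f1 f2 f3 f4 F iq unfolding a_def[symmetric] by (simp add: field_simps)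
qed

lemma lazy_majorant_window_sums:
  assumes per: "\<And>b. g (b + int n) = g b" and full: "\<And>b. window_sum g b n = F"
    and n: "1 \<le> n" and i: "i < n"
  shows "lazy_majorant n (\<lambda>j. window_sum g (centered_start j) j) i
    = window_sum g (centered_start i) i / 2 + window_sum g (centered_start i - 1) i / 4
      + window_sum g (centered_start i + 1) i / 4"
proof -
  let ?N = "\<lambda>j. window_sum g (centered_start j) j"
  consider "i = 0" | "i = 1" "n = 2" | "i = 1" "n \<ge> 3" | "i \<ge> 2" "i + 2 \<le> n" | "i \<ge> 2" "i = n - 1"
    using i n by linarith
  then show ?thesis
  proof cases
    case 1 then show ?thesis by (simp add: lazy_majorant_def avg_majorant_def)
  next
    case 2
    have "g (-1) = g 1" using per[of "-1"] 2 by simp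
    then show ?thesis using 2
      by (simp add: lazy_majorant_def avg_majorant_def window_sum_def centered_start_def eval_nat_numeral)
  next
    case 3
    then show ?thesis using lazy_majorant_one[OF 3(2), of ?N]
      by (simp add: window_sum_def centered_start_def eval_nat_numeral field_simps)
  next
    case 4
    define p where "p = i - 2"
    have p: "i = Suc (Suc p)" using 4 by (simp add: p_def)
    define a where "a = centered_start i"
    have l2: "centered_start (i + 2) = a - 1" by (simp add: a_def centered_start_Suc_Suc[symmetric])
    have l3: "centered_start (i - 2) = a + 1" by (simp add: a_def p centered_start_Suc_Suc)
    have e1: "window_sum g (a - 1) (i + 2) = window_sum g (a - 1) i + g (a - 1 + int i) + g (a + int i)"
      by (simp add: window_sum_Suc algebra_simps)
    have e2: "window_sum g (a + 1) i = window_sum g (a + 1) p + g (a - 1 + int i) + g (a + int i)"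
      unfolding p by (simp add: window_sum_Suc algebra_simps)
    show ?thesis
      unfolding lazy_majorant_interior[OF 4] l2 l3 a_def[symmetric] using e1 e2 p by (simp add: field_simps)
  next
    case 5
    have "n = i + 1" using 5 i by simp
    then show ?thesis by (rule lazy_majorant_window_sums_last[OF per full 5(1)])
  qed
qed

lemma lazy_majorant_centered_arc_sums:
  assumes n: "1 \<le> n" and i: "i < n"
  shows "lazy_majorant n (\<lambda>j. sum f (centered_arc n j)) i = sum (lazy_step n f) (centered_arc n i)"
proof -
  let ?g = "periodic_ext n f"
  let ?W = "\<lambda>a. window_sum ?g a i"
  have "lazy_majorant n (\<lambda>j. sum f (centered_arc n j)) = lazy_majorant n (\<lambda>j. window_sum ?g (centered_start j) j)"
    unfolding lazy_majorant_def by (subst avg_majorant_cong[of n _ "\<lambda>j. window_sum ?g (centered_start j) j"])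
      (simp_all add: sum_centered_arc[OF n])
  moreover have "window_sum ?g b n = sum f {0..<n}" for b
    using sum_arc[OF n order_refl, of f b] arc_full[OF n] by (simp add: window_sum_def)
  ultimately have "lazy_majorant n (\<lambda>j. sum f (centered_arc n j)) i
      = ?W (centered_start i) / 2 + ?W (centered_start i - 1) / 4 + ?W (centered_start i + 1) / 4"
    using lazy_majorant_window_sums[of ?g n, OF periodic_ext_add_period _ n i] by simp
  also have "\<dots> = window_sum (periodic_ext n (lazy_step n f)) (centered_start i) i"
    by (simp add: window_sum_def periodic_ext_lazy_step[OF n] sum.distrib sum_divide_distrib algebra_simps)
  also have "\<dots> = sum (lazy_step n f) (centered_arc n i)"
    using sum_centered_arc[OF n, of i] i by simp
  finally show ?thesis .
qed

section \<open>Moving versus static targets\<close>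

text \<open>The cap at m: after killing by a target with at least n - m states, at most m states carry mass.\<close>

fun survival_bound :: "nat \<Rightarrow> nat \<Rightarrow> nat \<Rightarrow> nat \<Rightarrow> real" where
  "survival_bound n m 0 j = (if 1 \<le> j \<and> 1 \<le> m then 1 else 0)"
| "survival_bound n m (Suc t) j = lazy_majorant n (survival_bound n m t) (min j m)"

lemma survival_bound_shape:
  assumes n: "1 \<le> n" and m: "m \<le> n"
  shows "survival_bound n m t 0 = 0 \<and> concave_upto n (survival_bound n m t)
    \<and> mono_upto n (survival_bound n m t)"
proof (induction t)
  case 0
  show ?case
  proof (intro conjI)
    show "concave_upto n (survival_bound n m 0)"
      unfolding concave_upto_def by (auto simp: le_Suc_eq)
    show "mono_upto n (survival_bound n m 0)"
      unfolding mono_upto_def by simp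
  qed simp
next
  case (Suc t)
  then have "concave_upto n (\<lambda>j. lazy_majorant n (survival_bound n m t) (min j m))"
    "mono_upto n (\<lambda>j. lazy_majorant n (survival_bound n m t) (min j m))"
    using capped_profile[OF lazy_majorant_shape[OF n] m] by auto
  then show ?case by (simp del: survival_bound.simps add: survival_bound.simps(2)[abs_def])
qed

lemma majorized_killed:
  assumes n: "1 \<le> n" and m: "m \<le> n" and x: "x < n"
    and A: "\<And>s. A s \<subseteq> {0..<n}" and card_A: "\<And>s. n - m \<le> card (A s)"
  shows "majorized n (killed n A x t) (survival_bound n m t)"
proof (induction t)
  case 0
  show ?case
    unfolding majorized_def
  proof (intro allI impI)
    fix S assume S: "S \<subseteq> {0..<n}"
    have "m \<ge> 1" if "x \<notin> A 0"
    proof -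
      have "card (A 0) \<le> card ({0..<n} - {x})" using A[of 0] that by (intro card_mono) auto
      then show ?thesis using card_A[of 0] x by simp
    qed
    moreover have "card S \<ge> 1" if "x \<in> S" using S that finite_subset
      by (metis One_nat_def Suc_leI card_gt_0_iff empty_iff finite_atLeastLessThan)
    moreover have "finite S" using S finite_subset by blast
    ultimately show "sum (killed n A x 0) S \<le> survival_bound n m 0 (card S)"
      unfolding sum_killed_0[OF \<open>finite S\<close>] by auto
  qed
next
  case (Suc t)
  note shape = survival_bound_shape[OF n m, of t]
  have step: "majorized n (lazy_step n (killed n A x t)) (lazy_majorant n (survival_bound n m t))"
    using majorized_lazy_step[OF n Suc] shape by blast
  show ?case
    unfolding majorized_def
  proof (intro allI impI)
    fix S assume S: "S \<subseteq> {0..<n}"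
    have "card (S - A (Suc t)) \<le> card ({0..<n} - A (Suc t))" using S by (intro card_mono) auto
    also have "\<dots> \<le> m" using A[of "Suc t"] card_A[of "Suc t"] by (simp add: card_Diff_subset finite_subset)
    finally have "card (S - A (Suc t)) \<le> min (card S) m"
      using S finite_subset by (auto intro: card_mono)
    moreover have "mono_upto n (lazy_majorant n (survival_bound n m t))"
      using lazy_majorant_shape(2)[OF n] shape by blast
    ultimately have "lazy_majorant n (survival_bound n m t) (card (S - A (Suc t)))
        \<le> survival_bound n m (Suc t) (card S)"
      using mono_uptoD m by auto
    moreover have "sum (lazy_step n (killed n A x t)) (S - A (Suc t))
        \<le> lazy_majorant n (survival_bound n m t) (card (S - A (Suc t)))"
      using step S unfolding majorized_def by blast
    ultimately show "sum (killed n A x (Suc t)) S \<le> survival_bound n m (Suc t) (card S)"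
      using sum_killed_Suc[OF n S] by simp
  qed
qed

lemma survival_bound_le_centered:
  assumes n: "1 \<le> n" and m: "m < n" and j: "j \<le> n"
  defines "B \<equiv> {0..<n} - centered_arc n m"
  shows "survival_bound n m t j \<le> sum (killed n (\<lambda>_. B) 0 t) (centered_arc n j)"
  using j
proof (induction t arbitrary: j)
  case 0
  have "0 \<in> centered_arc n j" if "1 \<le> j" for j
    using zero_in_centered_arc_one[OF n] centered_arc_mono[OF that] by blast
  moreover have "finite (centered_arc n j)"
    using finite_subset[OF centered_arc_subset] by blast
  ultimately show ?case
    unfolding sum_killed_0[OF \<open>finite (centered_arc n j)\<close>] B_def by auto
next
  case (Suc t)
  let ?\<nu> = "killed n (\<lambda>_. B) 0 t"
  have "survival_bound n m (Suc t) j \<le> lazy_majorant n (\<lambda>j. sum ?\<nu> (centered_arc n j)) (min j m)"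
    using Suc.IH by (simp add: lazy_majorant_mono)
  also have "\<dots> = sum (lazy_step n ?\<nu>) (centered_arc n (min j m))"
    using lazy_majorant_centered_arc_sums[OF n] m by simp
  also have "centered_arc n (min j m) = centered_arc n j - B"
    using centered_arc_mono[of j m n] centered_arc_mono[of m j n] centered_arc_subset[of n]
    by (auto simp: B_def min_def)
  also have "sum (lazy_step n ?\<nu>) (centered_arc n j - B)
      = sum (killed n (\<lambda>_. B) 0 (Suc t)) (centered_arc n j)"
    by (rule sum_killed_Suc[OF n centered_arc_subset, symmetric])
  finally show ?case .
qed

lemma exp_hit_le_centered:
  assumes n: "1 \<le> n" and m: "m < n" and x: "x < n"
    and A: "\<And>t. A t \<subseteq> {0..<n}" and card_A: "\<And>t. n - m \<le> card (A t)"
  shows "exp_hit n A x \<le> exp_hit n (\<lambda>_. {0..<n} - centered_arc n m) 0"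
proof -
  have "(\<Sum>y<n. killed n A x t y) \<le> (\<Sum>y<n. killed n (\<lambda>_. {0..<n} - centered_arc n m) 0 t y)"
    for t
  proof -
    have "majorized n (killed n A x t) (survival_bound n m t)"
      by (rule majorized_killed[OF n less_imp_le[OF m] x A card_A])
    then have "(\<Sum>y<n. killed n A x t y) \<le> survival_bound n m t n"
      unfolding majorized_def by (metis atLeast0LessThan card_lessThan order_refl)
    also have "\<dots> \<le> sum (killed n (\<lambda>_. {0..<n} - centered_arc n m) 0 t) (centered_arc n n)"
      by (rule survival_bound_le_centered[OF n m order_refl])
    finally show ?thesis by (simp add: centered_arc_full[OF n] atLeast0LessThan)
  qed
  then show ?thesis
    unfolding exp_hit_def by (intro suminf_le ennreal_leI summableI)
qed

lemma t_H_le_t_mov: "t_H n \<alpha> \<le> t_mov n \<alpha>"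
  unfolding t_H_def t_mov_def
proof (rule SUP_mono, clarify)
  fix x B assume "x < n" "B \<subseteq> {0..<n}" "\<alpha> \<le> unif n B"
  then show "\<exists>p\<in>{(x, A). x < n \<and> (\<forall>t. A t \<subseteq> {0..<n} \<and> \<alpha> \<le> unif n (A t))}.
      exp_hit n (\<lambda>_. B) x \<le> (case p of (x, A) \<Rightarrow> exp_hit n A x)"
    by (intro bexI[of _ "(x, \<lambda>_. B)"]) auto
qed

lemma card_ge_ceiling_of_unif:
  assumes "1 \<le> n" "A \<subseteq> {0..<n}" "\<alpha> \<le> unif n A"
  shows "nat \<lceil>\<alpha> * real n\<rceil> \<le> card A"
proof -
  have "\<alpha> * real n \<le> real (card A)"
    using assms by (simp add: unif_def Int_absorb2 field_simps)
  then show ?thesis by (simp add: nat_le_iff ceiling_le_iff)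
qed

lemma t_mov_le_t_H:
  assumes n: "1 \<le> n" and \<alpha>: "0 < \<alpha>" "\<alpha> \<le> 1"
  shows "t_mov n \<alpha> \<le> t_H n \<alpha>"
proof -
  define k where "k = nat \<lceil>\<alpha> * real n\<rceil>"
  define B where "B = {0..<n} - centered_arc n (n - k)"
  have "0 < \<alpha> * real n" "\<alpha> * real n \<le> real n" using \<alpha> n by auto
  then have "0 < \<lceil>\<alpha> * real n\<rceil>" "\<lceil>\<alpha> * real n\<rceil> \<le> int n" by (simp_all add: ceiling_le_iff)
  then have k: "1 \<le> k" "k \<le> n" "\<alpha> * real n \<le> real k"
    using le_of_int_ceiling[of "\<alpha> * real n"] unfolding k_def by linarith+
  have "B \<subseteq> {0..<n}" by (simp add: B_def)
  have "card B = k"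
    using card_Diff_subset[OF finite_subset[OF centered_arc_subset] centered_arc_subset, of n "n - k"]
      card_centered_arc[OF n, of "n - k"] k
    by (simp add: B_def)
  then have "\<alpha> \<le> unif n B"
    using k n Int_absorb2[OF \<open>B \<subseteq> {0..<n}\<close>] by (simp add: unif_def field_simps)
  then have static: "exp_hit n (\<lambda>_. B) 0 \<le> t_H n \<alpha>"
    unfolding t_H_def using n \<open>B \<subseteq> {0..<n}\<close> by (force intro: SUP_upper2[of "(0, B)"])
  show ?thesis
    unfolding t_mov_def
  proof (rule SUP_least, clarify)
    fix x and A :: "nat \<Rightarrow> nat set"
    assume "x < n" and A: "\<forall>t. A t \<subseteq> {0..<n} \<and> \<alpha> \<le> unif n (A t)"
    then have "exp_hit n A x \<le> exp_hit n (\<lambda>_. B) 0"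
      unfolding B_def using k card_ge_ceiling_of_unif[OF n] n
      by (intro exp_hit_le_centered) (auto simp: k_def)
    then show "exp_hit n A x \<le> t_H n \<alpha>" using static by simp
  qed
qed

theorem corollary1p3:
  fixes n :: nat and \<alpha> :: real
  assumes "n \<ge> 1" and "0 < \<alpha>" and "\<alpha> < 1"
  shows "t_H n \<alpha> = t_mov n \<alpha>"
  using t_H_le_t_mov t_mov_le_t_H assms by (simp add: antisym)

end
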